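(* Let $q=p^m$ with $p$ an odd prime and $m\ge1$, and for $b\in\mathbb{F}_{q^2}$ let $\delta(b)=\#\{u\in\mathbb{F}_{q^2}:\ 2u^{q+1}+u^2=b\}$. Then $\delta(0)=q$ if $p=3$, and $\delta(0)=1$ otherwise.
   Context: $\delta(b)$ equals $\delta_f(1,b+\tfrac14)$ for $f(x)=x^{q+2}$, where $\delta_f(a,b)=\#\{x\in\mathbb{F}_{q^2}: f(x+a)-f(x)=b\}$. *)

theory Defs
  imports "HOL-Computational_Algebra.Primes"
begin

text \<open>The finite field F_{q^2} is modelled by a finite field type 'a with CARD('a) = q^2.
  delta q b = number of u in F_{q^2} with 2 u^(q+1) + u^2 = b.\<close>

definition delta :: "nat \<Rightarrow> 'a::{field,finite} \<Rightarrow> nat" where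
  "delta q b = card {u::'a. 2 * u ^ (q + 1) + u ^ 2 = b}"

end

theory Submission
  imports Defs "HOL-Number_Theory.Residues" "HOL-Computational_Algebra.Polynomial"
    "HOL-Library.Cardinality"
begin

text \<open>Since 2 u^(q+1) + u^2 = u^2 (2 u^(q-1) + 1), the nonzero solutions are those of
  2 u^(q-1) = -1. Raising this to the power q + 1 and using u^(q^2-1) = 1 and 2^q = 2 gives
  4 = 1, impossible unless p = 3. For p = 3 we have 2 = -1, the equation becomes u^(q-1) = 1,
  and a finite field has exactly d d-th roots of unity for every divisor d of the order of its
  multiplicative group; here d = q - 1 divides q^2 - 1.\<close>

lemma two_le_card_zero_neq_one: "2 \<le> CARD('a::{zero_neq_one,finite})"
  using card_mono[of UNIV "{0::'a, 1}"] by simp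

lemma card_power_eq_le:
  fixes c :: "'a::field"
  assumes "n > 0"
  shows "card {x. x ^ n = c} \<le> n"
proof -
  let ?P = "monom 1 n - [:c:]"
  have "coeff ?P n = 1"
    using assms by (simp add: coeff_pCons split: nat.splits)
  then have "?P \<noteq> 0"
    by (metis coeff_0 zero_neq_one)
  have "{x. x ^ n = c} = {x. poly ?P x = 0}"
    by (auto simp: poly_monom)
  also have "card \<dots> \<le> degree ?P"
    by (rule card_poly_roots_bound) fact
  also have "degree ?P \<le> n"
    using degree_diff_le_max[of "monom 1 n" "[:c:]"] by (simp add: degree_monom_eq)
  finally show ?thesis .
qed

lemma power_card_minus_one_eq_one:
  fixes x :: "'a::{field,finite}"
  assumes "x \<noteq> 0"
  shows "x ^ (CARD('a) - 1) = 1"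
proof -
  have "(\<Prod>y\<in>UNIV-{0}. x * y) = x ^ (CARD('a) - 1) * \<Prod>(UNIV-{0::'a})"
    by (simp add: prod.distrib mult_ac card_Diff_singleton)
  also have "(\<Prod>y\<in>UNIV-{0}. x * y) = (\<Prod>y\<in>UNIV-{0::'a}. y)"
    by (rule prod.reindex_bij_witness[of _ "\<lambda>y. y / x" "\<lambda>y. x * y"]) (use assms in auto)
  finally show ?thesis
    by simp
qed

lemma card_roots_of_unity:
  assumes "d dvd CARD('a::{field,finite}) - 1"
  shows "card {x::'a. x ^ d = 1} = d"
proof -
  define n where "n = CARD('a) - 1"
  obtain e where n_eq: "n = d * e"
    using assms unfolding n_def by blast
  have "n > 0"
    using two_le_card_zero_neq_one[where 'a='a] by (simp add: n_def)
  then have "d > 0" "e > 0"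
    using n_eq by auto
  define S where "S = {x::'a. x ^ d = 1}"
  have "card S \<le> d"
    unfolding S_def using \<open>d > 0\<close> by (rule card_power_eq_le)
  moreover have "d \<le> card S"
  proof -
    \<comment> \<open>\<open>x \<mapsto> x\<^sup>e\<close> maps the \<open>n = d e\<close> units into \<open>S\<close>, with fibres of size at most \<open>e\<close>.\<close>
    have "UNIV - {0::'a} \<subseteq> (\<Union>c\<in>S. {x. x ^ e = c})"
    proof
      fix x :: 'a
      assume "x \<in> UNIV - {0}"
      then have "x ^ n = 1"
        using power_card_minus_one_eq_one[of x] by (simp add: n_def)
      then have "(x ^ e) ^ d = 1"
        by (simp add: n_eq mult.commute flip: power_mult)
      then show "x \<in> (\<Union>c\<in>S. {x. x ^ e = c})"
        by (auto simp: S_def)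
    qed
    then have "n \<le> card (\<Union>c\<in>S. {x::'a. x ^ e = c})"
      using card_mono[of "\<Union>c\<in>S. {x::'a. x ^ e = c}" "UNIV - {0::'a}"]
      by (simp add: n_def card_Diff_singleton)
    also have "\<dots> \<le> (\<Sum>c\<in>S. card {x::'a. x ^ e = c})"
      by (rule card_UN_le) simp
    also have "\<dots> \<le> (\<Sum>c\<in>S. e)"
      by (rule sum_mono) (rule card_power_eq_le[OF \<open>e > 0\<close>])
    also have "\<dots> = card S * e"
      by simp
    finally show ?thesis
      using \<open>e > 0\<close> by (simp add: n_eq)
  qed
  ultimately show ?thesis
    by (simp add: S_def)
qed

lemma prime_CHAR_finite: "prime CHAR('a::{idom,finite})"
  by (rule prime_CHAR_semidom) (simp add: finite_imp_CHAR_pos)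

lemma CHAR_eq_of_card_eq_prime_power:
  assumes "prime p" and "CARD('a::{field,finite}) = p ^ k"
  shows "CHAR('a) = p"
proof -
  have "CHAR('a) dvd p ^ k"
    using CHAR_dvd_CARD[where 'a='a] assms(2) by simp
  then show ?thesis
    using assms(1) prime_CHAR_finite[where 'a='a] prime_dvd_power primes_dvd_imp_eq by blast
qed

lemma of_nat_power_CHAR_power:
  assumes "prime CHAR('a::comm_semiring_1)" and "q = CHAR('a) ^ m"
  shows "(of_nat n :: 'a) ^ q = of_nat n"
proof (induction n)
  case 0
  have "q > 0"
    using assms by (simp add: prime_gt_0_nat)
  then show ?case
    by (simp add: zero_power)
next
  case (Suc n)
  then show ?case
    using freshmans_dream'[OF assms, of 1 "of_nat n"] by simp
qed

lemma two_mult_power_Suc_add_square_eq_0_iff: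
  fixes u :: "'a::idom"
  assumes "q \<ge> 1"
  shows "2 * u ^ (q + 1) + u ^ 2 = 0 \<longleftrightarrow> u = 0 \<or> 2 * u ^ (q - 1) = -1"
proof -
  have "q + 1 = 2 + (q - 1)"
    using assms by simp
  then have "2 * u ^ (q + 1) + u ^ 2 = u ^ 2 * (2 * u ^ (q - 1) + 1)"
    by (simp only: power_add) (simp add: algebra_simps)
  then show ?thesis
    by (simp add: eq_neg_iff_add_eq_0)
qed

lemma two_mult_power_pred_neq_minus_one:
  fixes u :: "'a::{field,finite}"
  assumes "CARD('a) = q ^ 2" and "q = CHAR('a) ^ m" and "odd CHAR('a)" and "CHAR('a) \<noteq> 3"
  shows "2 * u ^ (q - 1) \<noteq> -1"
proof
  assume u: "2 * u ^ (q - 1) = -1"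
  have "q \<ge> 2"
    using assms(1) two_le_card_zero_neq_one[where 'a='a] by (cases "q \<le> 1") (auto simp: le_Suc_eq)
  then have "u \<noteq> 0"
    using u by (auto simp: power_0_left)
  have "odd q"
    using assms(2,3) by simp
  have "(q - 1) * (q + 1) = CARD('a) - 1"
    by (cases q) (simp_all add: assms(1) power2_eq_square)
  have "(-1) ^ (q + 1) = (2 * u ^ (q - 1)) ^ (q + 1)"
    by (simp only: u)
  also have "\<dots> = 2 ^ (q + 1) * u ^ ((q - 1) * (q + 1))"
    by (simp only: power_mult_distrib power_mult)
  also have "\<dots> = 2 ^ q * 2 * u ^ (CARD('a) - 1)"
    using \<open>(q - 1) * (q + 1) = CARD('a) - 1\<close> by simp
  also have "\<dots> = 4"
    using of_nat_power_CHAR_power[OF prime_CHAR_finite assms(2), of 2]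
      power_card_minus_one_eq_one[OF \<open>u \<noteq> 0\<close>] by simp
  finally have "(4::'a) = 1"
    using \<open>odd q\<close> by simp
  have "of_nat 3 = (4::'a) - 1"
    by simp
  also have "\<dots> = 0"
    by (simp only: \<open>(4::'a) = 1\<close>) simp
  finally have "CHAR('a) dvd 3"
    by (simp only: of_nat_eq_0_iff_char_dvd)
  then show False
    using prime_CHAR_finite[where 'a='a] assms(4) prime_nat_iff[of 3] by auto
qed

theorem proposition3:
  fixes p m q :: nat
  assumes "prime p" and "odd p" and "m \<ge> 1" and "q = p ^ m"
    and "card (UNIV :: 'a::{field,finite} set) = q ^ 2"
  shows "delta q (0::'a) = (if p = 3 then q else 1)"
proof -
  have char: "CHAR('a) = p"
    using CHAR_eq_of_card_eq_prime_power[OF assms(1), where k = "2 * m"] assms(4,5)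
    by (simp add: power_mult mult.commute)
  have "q \<ge> 3"
    using assms(2-4) prime_ge_2_nat[OF assms(1)] self_le_power[of p m]
    by (cases "p = 2") auto
  have zeros: "{u::'a. 2 * u ^ (q + 1) + u ^ 2 = 0} = insert 0 {u. 2 * u ^ (q - 1) = -1}"
    using two_mult_power_Suc_add_square_eq_0_iff[of q] \<open>q \<ge> 3\<close> by auto
  have "0 \<notin> {u::'a. 2 * u ^ (q - 1) = -1}"
    using \<open>q \<ge> 3\<close> by (simp add: power_0_left)
  show ?thesis
  proof (cases "p = 3")
    case True
    then have two: "(2::'a) = -1"
      using of_nat_eq_0_iff_char_dvd[of 3, where 'a='a] char by (simp add: eq_neg_iff_add_eq_0)
    have roots: "{u::'a. 2 * u ^ (q - 1) = -1} = {u. u ^ (q - 1) = 1}"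
      by (simp only: two) simp
    have "CARD('a) - 1 = (q - 1) * (q + 1)"
      by (cases q) (simp_all add: assms(5) power2_eq_square)
    then have "card {u::'a. u ^ (q - 1) = 1} = q - 1"
      by (intro card_roots_of_unity) simp
    then show ?thesis
      using zeros roots \<open>0 \<notin> _\<close> True \<open>q \<ge> 3\<close> by (simp add: delta_def)
  next
    case False
    then have "{u::'a. 2 * u ^ (q - 1) = -1} = {}"
      using two_mult_power_pred_neq_minus_one[of q m] char assms(2,4,5) by auto
    then show ?thesis
      using zeros False by (simp add: delta_def)
  qed
qed

end
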